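(* Let $T=(V,E)$ be a tree with $\mathrm{pthin}(T)=2$, and let $\sigma$ be an ordering of $V$ and $S=\{V^0,V^1\}$ a partition of $V$ that are strongly consistent. Let $v_0\in V^0$ and $v_1\in V^1$ be adjacent. If $u$ is a vertex adjacent to neither $v_0$ nor $v_1$ (and distinct from them) with $u<v_0$, then $u<v_1$ as well (i.e., $u$ is strictly before the edge $v_0v_1$). Symmetrically, if such $u$ satisfies $v_0<u$, then $v_1<u$ (i.e., $u$ is strictly after $v_0v_1$).
   Context: For a graph $G=(V,E)$, a linear ordering $<$ of $V$ and a partition of $V$ into classes are called strongly consistent if for every triple $r<s<t$ of vertices with $rt\in E$: if $r$ and $s$ belong to the same class then $st\in E$, and if $s$ and $t$ belong to the same class then $rs\in E$. The proper thinness $\mathrm{pthin}(G)$ is the minimum $k$ such that some ordering and some partition into $k$ classes are strongly consistent. A vertex $u\notin\{v_0,v_1\}$ is strictly before the edge $v_0v_1$ if $u<v_0$ and $u<v_1$, and strictly after if $v_0<u$ and $v_1<u$. *)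

theory Defs
  imports Main
begin

definition simple_graph :: "'a set \<Rightarrow> ('a \<Rightarrow> 'a \<Rightarrow> bool) \<Rightarrow> bool" where
  "simple_graph V E \<longleftrightarrow> finite V \<and> (\<forall>x y. E x y \<longrightarrow> x \<in> V \<and> y \<in> V)
     \<and> (\<forall>x y. E x y \<longrightarrow> E y x) \<and> (\<forall>x. \<not> E x x)"

definition is_walk :: "'a set \<Rightarrow> ('a \<Rightarrow> 'a \<Rightarrow> bool) \<Rightarrow> 'a list \<Rightarrow> bool" where
  "is_walk V E p \<longleftrightarrow> p \<noteq> [] \<and> set p \<subseteq> V \<and> (\<forall>i. Suc i < length p \<longrightarrow> E (p ! i) (p ! Suc i))"

definition connected_graph :: "'a set \<Rightarrow> ('a \<Rightarrow> 'a \<Rightarrow> bool) \<Rightarrow> bool" where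
  "connected_graph V E \<longleftrightarrow> V \<noteq> {} \<and>
     (\<forall>x\<in>V. \<forall>y\<in>V. \<exists>p. is_walk V E p \<and> hd p = x \<and> last p = y)"

definition is_cycle :: "'a set \<Rightarrow> ('a \<Rightarrow> 'a \<Rightarrow> bool) \<Rightarrow> 'a list \<Rightarrow> bool" where
  "is_cycle V E c \<longleftrightarrow> length c \<ge> 3 \<and> distinct c \<and> is_walk V E c \<and> E (last c) (hd c)"

definition is_tree :: "'a set \<Rightarrow> ('a \<Rightarrow> 'a \<Rightarrow> bool) \<Rightarrow> bool" where
  "is_tree V E \<longleftrightarrow> simple_graph V E \<and> connected_graph V E \<and> (\<nexists>c. is_cycle V E c)"

definition linear_ordering_on :: "'a set \<Rightarrow> ('a \<Rightarrow> 'a \<Rightarrow> bool) \<Rightarrow> bool" where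
  "linear_ordering_on V lt \<longleftrightarrow>
     (\<forall>x\<in>V. \<not> lt x x) \<and>
     (\<forall>x\<in>V. \<forall>y\<in>V. \<forall>z\<in>V. lt x y \<longrightarrow> lt y z \<longrightarrow> lt x z) \<and>
     (\<forall>x\<in>V. \<forall>y\<in>V. x \<noteq> y \<longrightarrow> lt x y \<or> lt y x)"

text \<open>A partition of V into (at most) k classes, given by a class-index map cls : V -> {0..<k}.
  Vertices x, y are in the same class iff cls x = cls y.\<close>
definition strongly_consistent ::
  "'a set \<Rightarrow> ('a \<Rightarrow> 'a \<Rightarrow> bool) \<Rightarrow> ('a \<Rightarrow> 'a \<Rightarrow> bool) \<Rightarrow> ('a \<Rightarrow> nat) \<Rightarrow> bool" where
  "strongly_consistent V E lt cls \<longleftrightarrow>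
     (\<forall>r\<in>V. \<forall>s\<in>V. \<forall>t\<in>V. lt r s \<and> lt s t \<and> E r t \<longrightarrow>
        (cls r = cls s \<longrightarrow> E s t) \<and> (cls s = cls t \<longrightarrow> E r s))"

definition proper_k_thin :: "'a set \<Rightarrow> ('a \<Rightarrow> 'a \<Rightarrow> bool) \<Rightarrow> nat \<Rightarrow> bool" where
  "proper_k_thin V E k \<longleftrightarrow> (\<exists>lt cls. linear_ordering_on V lt \<and> (\<forall>v\<in>V. cls v < k)
     \<and> strongly_consistent V E lt cls)"

definition pthin :: "'a set \<Rightarrow> ('a \<Rightarrow> 'a \<Rightarrow> bool) \<Rightarrow> nat" where
  "pthin V E = (LEAST k. proper_k_thin V E k)"

end

theory Submission
  imports Defs
begin

text \<open>With only two classes, a vertex \<open>u\<close> shares its class with one end of the edge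
  \<open>v\<^sub>0v\<^sub>1\<close>. If \<open>u\<close> lay between the two ends, strong consistency applied to that
  triple would force \<open>u\<close> to be adjacent to one of them.\<close>

lemma strongly_consistent_no_isolated_between:
  assumes "strongly_consistent V E lt cls"
    and "r \<in> V" "s \<in> V" "t \<in> V" "E r t"
    and "cls s = cls r \<or> cls s = cls t"
    and "\<not> E r s" "\<not> E s t"
  shows "\<not> (lt r s \<and> lt s t)"
  using assms unfolding strongly_consistent_def by metis

lemma simple_graph_sym: "simple_graph V E \<Longrightarrow> E x y \<Longrightarrow> E y x"
  unfolding simple_graph_def by blast

lemma linear_ordering_on_total:
  "linear_ordering_on V lt \<Longrightarrow> x \<in> V \<Longrightarrow> y \<in> V \<Longrightarrow> x \<noteq> y \<Longrightarrow> \<not> lt x y \<Longrightarrow> lt y x"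
  unfolding linear_ordering_on_def by blast

theorem propositionA3:
  fixes V :: "'a set" and E :: "'a \<Rightarrow> 'a \<Rightarrow> bool"
    and lt :: "'a \<Rightarrow> 'a \<Rightarrow> bool" and cls :: "'a \<Rightarrow> nat"
    and v0 v1 u :: 'a
  assumes tree: "is_tree V E"
    and pth: "pthin V E = 2"
    and ord: "linear_ordering_on V lt"
    and part: "\<forall>v\<in>V. cls v = 0 \<or> cls v = 1"
    and sc: "strongly_consistent V E lt cls"
    and v0: "v0 \<in> V" "cls v0 = 0"
    and v1: "v1 \<in> V" "cls v1 = 1"
    and adj: "E v0 v1"
    and u: "u \<in> V" "u \<noteq> v0" "u \<noteq> v1" "\<not> E u v0" "\<not> E u v1"
  shows "(lt u v0 \<longrightarrow> lt u v1) \<and> (lt v0 u \<longrightarrow> lt v1 u)"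
proof -
  have simple: "simple_graph V E" using tree unfolding is_tree_def by blast
  have adj': "E v1 v0" and u': "\<not> E v0 u" "\<not> E v1 u"
    using simple_graph_sym[OF simple] adj u by blast+
  have cls_u: "cls u = cls v0 \<or> cls u = cls v1" using part u v0 v1 by auto
  have "\<not> (lt v1 u \<and> lt u v0)"
    using strongly_consistent_no_isolated_between[OF sc v1(1) u(1) v0(1) adj'] cls_u u u'
    by blast
  moreover have "\<not> (lt v0 u \<and> lt u v1)"
    using strongly_consistent_no_isolated_between[OF sc v0(1) u(1) v1(1) adj] cls_u u u'
    by blast
  ultimately show ?thesis
    using linear_ordering_on_total[OF ord] u v0 v1 by blast
qed

end
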